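(* Let $G$ be a graph such that the free category $\mathcal{F}_1(G)$ is a totally ordered set (regarded as a category). Then $\mathcal{F}_1(G)$ is isomorphic to one of the following: - a finite ordinal $\mathsf{0},\mathsf{1},\dots,\mathsf{n},\dots$; - one of the totally ordered sets $\mathbb{N}$, $\mathbb{N}^{\mathrm{op}}$ and $\mathbb{Z}$ with their usual orders.
   Context: A graph is a directed multigraph, consisting of objects, arrows, and domain and codomain maps. $\mathcal{F}_1(G)$ is the free category on $G$. Its objects are the vertices of $G$, its morphisms are the finite composable paths of arrows, and identities are the empty paths. A poset is regarded as a category with a unique morphism $x\to y$ exactly when $x\le y$. The finite ordinal $\mathsf{n}$ is the totally ordered set $0<1<\dots<n-1$; in particular $\mathsf{0}$ is empty. *)

theory Defs
  imports Main
begin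

record ('v, 'a) graph =
  gobj :: "'v set"
  garr :: "'a set"
  gdom :: "'a \<Rightarrow> 'v"
  gcod :: "'a \<Rightarrow> 'v"

definition wf_graph :: "('v, 'a) graph \<Rightarrow> bool" where
  "wf_graph G \<longleftrightarrow> (\<forall>e \<in> garr G. gdom G e \<in> gobj G \<and> gcod G e \<in> gobj G)"

text \<open>Morphisms of the free category F_1(G) from x to y: finite composable
paths of arrows (listed in order of traversal); the identity on x is the empty path.\<close>

fun is_path :: "('v, 'a) graph \<Rightarrow> 'v \<Rightarrow> 'a list \<Rightarrow> 'v \<Rightarrow> bool" where
  "is_path G x [] y \<longleftrightarrow> x \<in> gobj G \<and> x = y"
| "is_path G x (e # es) y \<longleftrightarrow> x \<in> gobj G \<and> e \<in> garr G \<and> gdom G e = x \<and> is_path G (gcod G e) es y"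

definition free_hom :: "('v, 'a) graph \<Rightarrow> 'v \<Rightarrow> 'v \<Rightarrow> 'a list set" where
  "free_hom G x y = {p. is_path G x p y}"

text \<open>A poset (P, le) as a category: a unique morphism x \<rightarrow> y exactly when le x y.
Hom-sets are modelled as {() | le x y}.\<close>

definition poset_hom :: "('b \<Rightarrow> 'b \<Rightarrow> bool) \<Rightarrow> 'b \<Rightarrow> 'b \<Rightarrow> unit set" where
  "poset_hom le x y = {u. le x y}"

text \<open>F_1(G) is isomorphic (as a category) to the poset category (P, le):
a bijection on objects together with bijections on all hom-sets. (Functoriality
is automatic since the target is thin.)\<close>

definition free_cat_iso_poset ::
  "('v, 'a) graph \<Rightarrow> 'b set \<Rightarrow> ('b \<Rightarrow> 'b \<Rightarrow> bool) \<Rightarrow> bool" where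
  "free_cat_iso_poset G P le \<longleftrightarrow>
     (\<exists>f. bij_betw f (gobj G) P \<and>
        (\<forall>x \<in> gobj G. \<forall>y \<in> gobj G.
           \<exists>h. bij_betw h (free_hom G x y) (poset_hom le (f x) (f y))))"

definition free_cat_is_total_order :: "('v, 'a) graph \<Rightarrow> bool" where
  "free_cat_is_total_order G \<longleftrightarrow>
     (\<exists>le. (\<forall>x \<in> gobj G. le x x)
         \<and> (\<forall>x \<in> gobj G. \<forall>y \<in> gobj G. \<forall>z \<in> gobj G. le x y \<longrightarrow> le y z \<longrightarrow> le x z)
         \<and> (\<forall>x \<in> gobj G. \<forall>y \<in> gobj G. le x y \<longrightarrow> le y x \<longrightarrow> x = y)
         \<and> (\<forall>x \<in> gobj G. \<forall>y \<in> gobj G. le x y \<or> le y x)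
         \<and> (\<forall>x \<in> gobj G. \<forall>y \<in> gobj G.
              \<exists>h. bij_betw h (free_hom G x y) (poset_hom le x y)))"

end

theory Submission
  imports Defs
begin

text \<open>Since F_1(G) is thin, any two composable paths x \<rightarrow> z \<rightarrow> y concatenate to the
unique path x \<rightarrow> y, so every z between x and y is a vertex on that path: intervals of
the order are finite. A total order with finite intervals is ranked into \<int> by
counting the elements between a base point and z; the ranks form a convex set of
integers, i.e. a finite interval, a ray in either direction, or all of \<int>, and
these are isomorphic to n, \<nat>, the opposite of \<nat> and \<int>.\<close>

lemma is_path_start: "is_path G x p y \<Longrightarrow> x \<in> gobj G"
  by (cases p) auto

lemma is_path_append:
  "is_path G x (p @ q) y \<longleftrightarrow> (\<exists>z. is_path G x p z \<and> is_path G z q y)"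
  by (induction p arbitrary: x) (auto dest: is_path_start)

lemma is_path_end: "is_path G x p y \<Longrightarrow> y \<in> insert x (gcod G ` set p)"
  by (induction p arbitrary: x) auto

lemma bij_betw_poset_hom_singleton:
  assumes "bij_betw h A (poset_hom le x y)" and "le x y"
  shows "\<exists>p. A = {p}"
proof -
  have "card A = card {()}"
    using bij_betw_same_card[OF assms(1)] assms(2) by (simp add: poset_hom_def UNIV_unit)
  then show ?thesis by (simp add: card_1_singleton_iff)
qed

lemma thin_free_cat_finite_interval:
  assumes trans: "\<forall>x \<in> gobj G. \<forall>y \<in> gobj G. \<forall>z \<in> gobj G. le x y \<longrightarrow> le y z \<longrightarrow> le x z"
    and homs: "\<forall>x \<in> gobj G. \<forall>y \<in> gobj G. \<exists>h. bij_betw h (free_hom G x y) (poset_hom le x y)"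
    and x: "x \<in> gobj G" and y: "y \<in> gobj G"
  shows "finite {z \<in> gobj G. le x z \<and> le z y}"
proof (cases "le x y")
  case False
  then have "{z \<in> gobj G. le x z \<and> le z y} = {}" using trans x y by blast
  then show ?thesis by (metis finite.emptyI)
next
  case True
  have unique_path: "\<exists>p. free_hom G u v = {p}" if "u \<in> gobj G" "v \<in> gobj G" "le u v" for u v
    using homs that bij_betw_poset_hom_singleton by metis
  obtain p where p: "free_hom G x y = {p}" using unique_path x y True by blast
  have "{z \<in> gobj G. le x z \<and> le z y} \<subseteq> insert x (gcod G ` set p)"
  proof
    fix z assume z: "z \<in> {z \<in> gobj G. le x z \<and> le z y}"
    obtain p1 where p1: "free_hom G x z = {p1}" using unique_path x z by blast
    obtain p2 where p2: "free_hom G z y = {p2}" using unique_path y z by blast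
    have "p1 @ p2 \<in> free_hom G x y"
      using p1 p2 by (auto simp: free_hom_def is_path_append)
    then have "set p1 \<subseteq> set p" using p by auto
    then show "z \<in> insert x (gcod G ` set p)"
      using is_path_end[of G x p1 z] p1 by (auto simp: free_hom_def)
  qed
  then show ?thesis by (rule finite_subset) simp
qed

definition order_iso_betw ::
  "('a \<Rightarrow> 'b) \<Rightarrow> 'a set \<Rightarrow> 'b set \<Rightarrow> ('a \<Rightarrow> 'a \<Rightarrow> bool) \<Rightarrow> ('b \<Rightarrow> 'b \<Rightarrow> bool) \<Rightarrow> bool" where
  "order_iso_betw f A B le le' \<longleftrightarrow>
     bij_betw f A B \<and> (\<forall>x \<in> A. \<forall>y \<in> A. le x y \<longleftrightarrow> le' (f x) (f y))"

lemma order_iso_betw_comp: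
  assumes "order_iso_betw f A B le1 le2" and "order_iso_betw g B C le2 le3"
  shows "order_iso_betw (g \<circ> f) A C le1 le3"
  using assms bij_betw_trans[of f A B g C] unfolding order_iso_betw_def bij_betw_def by auto

lemma free_cat_iso_poset_if_order_iso:
  assumes homs: "\<forall>x \<in> gobj G. \<forall>y \<in> gobj G. \<exists>h. bij_betw h (free_hom G x y) (poset_hom le x y)"
    and iso: "order_iso_betw f (gobj G) P le le'"
  shows "free_cat_iso_poset G P le'"
proof -
  have "\<forall>x \<in> gobj G. \<forall>y \<in> gobj G. poset_hom le x y = poset_hom le' (f x) (f y)"
    using iso by (simp add: order_iso_betw_def poset_hom_def)
  then show ?thesis
    using homs iso unfolding free_cat_iso_poset_def order_iso_betw_def by metis
qed

definition int_convex :: "int set \<Rightarrow> bool" where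
  "int_convex I \<longleftrightarrow> (\<forall>x \<in> I. \<forall>y \<in> I. {x..y} \<subseteq> I)"

locale locally_finite_total_order =
  fixes V :: "'v set" and le :: "'v \<Rightarrow> 'v \<Rightarrow> bool"
  assumes refl: "x \<in> V \<Longrightarrow> le x x"
    and trans: "x \<in> V \<Longrightarrow> y \<in> V \<Longrightarrow> z \<in> V \<Longrightarrow> le x y \<Longrightarrow> le y z \<Longrightarrow> le x z"
    and antisym: "x \<in> V \<Longrightarrow> y \<in> V \<Longrightarrow> le x y \<Longrightarrow> le y x \<Longrightarrow> x = y"
    and total: "x \<in> V \<Longrightarrow> y \<in> V \<Longrightarrow> le x y \<or> le y x"
    and finite_interval: "x \<in> V \<Longrightarrow> y \<in> V \<Longrightarrow> finite {z \<in> V. le x z \<and> le z y}"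
begin

definition interval :: "'v \<Rightarrow> 'v \<Rightarrow> 'v set" where
  "interval x y = {z \<in> V. le x z \<and> le z y}"

definition rank :: "'v \<Rightarrow> 'v \<Rightarrow> int" where
  "rank a z = (if le a z then int (card (interval a z)) - 1 else 1 - int (card (interval z a)))"

lemma finite_interval': "x \<in> V \<Longrightarrow> y \<in> V \<Longrightarrow> finite (interval x y)"
  unfolding interval_def using finite_interval .

lemma card_interval_psubset:
  "x \<in> V \<Longrightarrow> y \<in> V \<Longrightarrow> interval u v \<subset> interval x y \<Longrightarrow> card (interval u v) < card (interval x y)"
  using finite_interval' psubset_card_mono by blast

lemma rank_self: "a \<in> V \<Longrightarrow> rank a a = 0"
proof -
  assume a: "a \<in> V"
  have "interval a a = {a}" using a refl antisym unfolding interval_def by blast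
  then show ?thesis using a refl unfolding rank_def by simp
qed

lemma rank_nonneg:
  assumes a: "a \<in> V" and z: "z \<in> V" and "le a z"
  shows "0 \<le> rank a z"
proof -
  have "a \<in> interval a z" using assms refl unfolding interval_def by blast
  then have "interval a z \<noteq> {}" by blast
  then have "0 < card (interval a z)" using finite_interval'[OF a z] by (simp add: card_gt_0_iff)
  then show ?thesis using assms(3) unfolding rank_def by simp
qed

lemma rank_neg:
  assumes a: "a \<in> V" and z: "z \<in> V" and "\<not> le a z"
  shows "rank a z < 0"
proof -
  have "{z, a} \<subseteq> interval z a" using assms refl total unfolding interval_def by blast
  moreover have "z \<noteq> a" using assms refl by blast
  ultimately have "card {z, a} \<le> card (interval z a)"
    using finite_interval'[OF z a] card_mono by blast
  then have "2 \<le> card (interval z a)" using \<open>z \<noteq> a\<close> by simp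
  then show ?thesis using assms(3) unfolding rank_def by simp
qed

lemma rank_strict_mono:
  assumes a: "a \<in> V" and x: "x \<in> V" and y: "y \<in> V" and xy: "le x y" "x \<noteq> y"
  shows "rank a x < rank a y"
proof -
  consider "le a x" | "\<not> le a x" "le a y" | "\<not> le a x" "\<not> le a y" by blast
  then show ?thesis
  proof cases
    case 1
    then have ay: "le a y" using trans[OF a x y] xy by blast
    have "interval a x \<subseteq> interval a y"
      using trans[OF _ x y] xy unfolding interval_def by blast
    moreover have "y \<in> interval a y" "y \<notin> interval a x"
      using ay y refl antisym[OF x y] xy unfolding interval_def by auto
    ultimately have "interval a x \<subset> interval a y" by blast
    then show ?thesis using 1 ay card_interval_psubset[OF a y] unfolding rank_def by simp
  next
    case 2
    then show ?thesis using rank_neg[OF a x] rank_nonneg[OF a y] by simp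
  next
    case 3
    have "interval y a \<subseteq> interval x a"
      using trans[OF x y] xy unfolding interval_def by blast
    moreover have "x \<in> interval x a" "x \<notin> interval y a"
      using 3 total[OF a x] x refl antisym[OF x y] xy unfolding interval_def by auto
    ultimately have "interval y a \<subset> interval x a" by blast
    then show ?thesis using 3 card_interval_psubset[OF x a] unfolding rank_def by simp
  qed
qed

lemma rank_le_iff:
  assumes a: "a \<in> V" and x: "x \<in> V" and y: "y \<in> V"
  shows "rank a x \<le> rank a y \<longleftrightarrow> le x y"
proof
  assume "le x y"
  then show "rank a x \<le> rank a y" using rank_strict_mono[OF a x y] by (cases "x = y") auto
next
  assume "rank a x \<le> rank a y"
  then show "le x y" using rank_strict_mono[OF a y x] total[OF x y] by fastforce
qed

lemma inj_on_rank: "a \<in> V \<Longrightarrow> inj_on (rank a) V"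
proof (rule inj_onI)
  fix x y assume "a \<in> V" "x \<in> V" "y \<in> V" "rank a x = rank a y"
  then show "x = y" using rank_le_iff antisym by (metis order.refl)
qed

lemma card_rank_image_interval:
  "a \<in> V \<Longrightarrow> x \<in> V \<Longrightarrow> y \<in> V \<Longrightarrow> card (rank a ` interval x y) = card (interval x y)"
  by (rule card_image, rule inj_on_subset[OF inj_on_rank]) (auto simp: interval_def)

text \<open>The image lies between the end ranks and, rank being injective, has exactly as
many elements as that integer interval; so it is the whole integer interval.\<close>

lemma rank_image_interval_above:
  assumes a: "a \<in> V" and z: "z \<in> V" and "le a z"
  shows "rank a ` interval a z = {0..rank a z}"
proof (rule card_subset_eq)
  show "rank a ` interval a z \<subseteq> {0..rank a z}"
  proof (rule image_subsetI)
    fix w assume "w \<in> interval a z"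
    then show "rank a w \<in> {0..rank a z}"
      using a z rank_le_iff[of a a w] rank_le_iff[of a w z] rank_self[OF a]
      unfolding interval_def by auto
  qed
  show "card (rank a ` interval a z) = card {0..rank a z}"
    using assms card_rank_image_interval unfolding rank_def by simp
qed simp

lemma rank_image_interval_below:
  assumes a: "a \<in> V" and z: "z \<in> V" and "\<not> le a z"
  shows "rank a ` interval z a = {rank a z..0}"
proof (rule card_subset_eq)
  show "rank a ` interval z a \<subseteq> {rank a z..0}"
  proof (rule image_subsetI)
    fix w assume "w \<in> interval z a"
    then show "rank a w \<in> {rank a z..0}"
      using a z rank_le_iff[of a z w] rank_le_iff[of a w a] rank_self[OF a]
      unfolding interval_def by auto
  qed
  show "card (rank a ` interval z a) = card {rank a z..0}"
    using assms card_rank_image_interval unfolding rank_def by simp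
qed simp

lemma int_convex_rank_image:
  assumes a: "a \<in> V"
  shows "int_convex (rank a ` V)"
  unfolding int_convex_def
proof (intro ballI subsetI)
  fix j i k assume "i \<in> rank a ` V" "k \<in> rank a ` V" "j \<in> {i..k}"
  then obtain x y where x: "x \<in> V" and y: "y \<in> V" and j: "rank a x \<le> j" "j \<le> rank a y"
    by auto
  show "j \<in> rank a ` V"
  proof (cases "0 \<le> j")
    case True
    then have "le a y" using rank_neg[OF a y] j by force
    then have "j \<in> rank a ` interval a y" using rank_image_interval_above[OF a y] True j by simp
    then show ?thesis unfolding interval_def by blast
  next
    case False
    then have "\<not> le a x" using rank_nonneg[OF a x] j by force
    then have "j \<in> rank a ` interval x a" using rank_image_interval_below[OF a x] False j by simp
    then show ?thesis unfolding interval_def by blast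
  qed
qed

end

lemma locally_finite_total_order_embeds_int:
  assumes "locally_finite_total_order V le"
  shows "\<exists>r :: 'v \<Rightarrow> int. order_iso_betw r V (r ` V) le (\<le>) \<and> int_convex (r ` V)"
proof (cases "V = {}")
  case True
  then show ?thesis by (simp add: order_iso_betw_def int_convex_def bij_betw_def)
next
  case False
  interpret locally_finite_total_order V le by (fact assms)
  obtain a where a: "a \<in> V" using False by blast
  have "order_iso_betw (rank a) V (rank a ` V) le (\<le>)"
    using inj_on_rank[OF a] rank_le_iff[OF a] by (simp add: order_iso_betw_def bij_betw_def)
  then show ?thesis using int_convex_rank_image[OF a] by blast
qed

lemma int_convex_unbounded_above:
  assumes conv: "int_convex I" and "x \<in> I" and unbounded: "\<forall>u \<in> I. \<exists>v \<in> I. u < v"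
  shows "{x..} \<subseteq> I"
proof
  fix k assume "k \<in> {x..}"
  then have "x \<le> k" by simp
  then show "k \<in> I"
  proof (induction k rule: int_ge_induct)
    case base
    then show ?case using \<open>x \<in> I\<close> .
  next
    case (step i)
    then obtain v where "v \<in> I" "i < v" using unbounded by blast
    then show ?case using conv step.IH unfolding int_convex_def by fastforce
  qed
qed

lemma int_convex_unbounded_below:
  assumes conv: "int_convex I" and "x \<in> I" and unbounded: "\<forall>u \<in> I. \<exists>v \<in> I. v < u"
  shows "{..x} \<subseteq> I"
proof
  fix k assume "k \<in> {..x}"
  then have "k \<le> x" by simp
  then show "k \<in> I"
  proof (induction k rule: int_le_induct)
    case base
    then show ?case using \<open>x \<in> I\<close> .
  next
    case (step i)
    then obtain v where "v \<in> I" "v < i" using unbounded by blast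
    then show ?case using conv step.IH unfolding int_convex_def by fastforce
  qed
qed

lemma set_bounds_cases:
  fixes I :: "'a :: linorder set"
  obtains (bounded) lo hi where "lo \<in> I" "hi \<in> I" "\<forall>u \<in> I. lo \<le> u \<and> u \<le> hi"
    | (below) lo where "lo \<in> I" "\<forall>u \<in> I. lo \<le> u" "\<forall>u \<in> I. \<exists>v \<in> I. u < v"
    | (above) hi where "hi \<in> I" "\<forall>u \<in> I. u \<le> hi" "\<forall>u \<in> I. \<exists>v \<in> I. v < u"
    | (unbounded) "\<forall>u \<in> I. \<exists>v \<in> I. u < v" "\<forall>u \<in> I. \<exists>v \<in> I. v < u"
proof (cases "\<exists>lo \<in> I. \<forall>u \<in> I. lo \<le> u"; cases "\<exists>hi \<in> I. \<forall>u \<in> I. u \<le> hi")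
  assume "\<exists>lo \<in> I. \<forall>u \<in> I. lo \<le> u" "\<exists>hi \<in> I. \<forall>u \<in> I. u \<le> hi"
  then show thesis using bounded by blast
next
  assume "\<exists>lo \<in> I. \<forall>u \<in> I. lo \<le> u" "\<not> (\<exists>hi \<in> I. \<forall>u \<in> I. u \<le> hi)"
  then show thesis using below by (auto simp: not_le)
next
  assume "\<not> (\<exists>lo \<in> I. \<forall>u \<in> I. lo \<le> u)" "\<exists>hi \<in> I. \<forall>u \<in> I. u \<le> hi"
  then show thesis using above by (auto simp: not_le)
next
  assume "\<not> (\<exists>lo \<in> I. \<forall>u \<in> I. lo \<le> u)" "\<not> (\<exists>hi \<in> I. \<forall>u \<in> I. u \<le> hi)"
  then show thesis using unbounded by (auto simp: not_le)
qed

text \<open>The empty set is covered by the first case, as {1..0}.\<close>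

lemma int_convex_cases:
  assumes conv: "int_convex I"
  shows "(\<exists>lo hi. I = {lo..hi}) \<or> (\<exists>lo. I = {lo..}) \<or> (\<exists>hi. I = {..hi}) \<or> I = UNIV"
proof (cases "I = {}")
  case True
  then have "I = {1..0::int}" by simp
  then show ?thesis by blast
next
  case False
  then obtain x where x: "x \<in> I" by blast
  show ?thesis
  proof (cases rule: set_bounds_cases[of I])
    case (bounded lo hi)
    then have "I = {lo..hi}" using conv unfolding int_convex_def by auto
    then show ?thesis by blast
  next
    case (below lo)
    then have "I = {lo..}" using int_convex_unbounded_above[OF conv] by auto
    then show ?thesis by blast
  next
    case (above hi)
    then have "I = {..hi}" using int_convex_unbounded_below[OF conv] by auto
    then show ?thesis by blast
  next
    case unbounded
    then have "I = UNIV"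
      using int_convex_unbounded_above[OF conv x] int_convex_unbounded_below[OF conv x]
      by (metis UNIV_eq_I atLeast_iff atMost_iff linorder_le_cases subsetD)
    then show ?thesis by blast
  qed
qed

lemma order_iso_int_interval:
  "order_iso_betw (\<lambda>x. nat (x - lo)) {lo..hi} {0..<nat (hi - lo + 1)} (\<le>) (\<le>)"
  unfolding order_iso_betw_def
  by (auto intro!: bij_betw_byWitness[where f' = "\<lambda>k. int k + lo"])

lemma order_iso_int_atLeast: "order_iso_betw (\<lambda>x. nat (x - lo)) {lo..} UNIV (\<le>) (\<le>)"
  unfolding order_iso_betw_def
  by (auto intro!: bij_betw_byWitness[where f' = "\<lambda>k. int k + lo"])

lemma order_iso_int_atMost: "order_iso_betw (\<lambda>x. nat (hi - x)) {..hi} UNIV (\<le>) (\<ge>)"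
  unfolding order_iso_betw_def
  by (auto intro!: bij_betw_byWitness[where f' = "\<lambda>k. hi - int k"])

lemma int_convex_order_iso:
  assumes "int_convex I"
  shows "(\<exists>(n :: nat) g. order_iso_betw g I {0..<n} (\<le>) (\<le>))
       \<or> (\<exists>g. order_iso_betw g I (UNIV :: nat set) (\<le>) (\<le>))
       \<or> (\<exists>g. order_iso_betw g I (UNIV :: nat set) (\<le>) (\<ge>))
       \<or> (\<exists>g. order_iso_betw g I (UNIV :: int set) (\<le>) (\<le>))"
  using int_convex_cases[OF assms]
proof (elim disjE exE)
  fix lo hi assume "I = {lo..hi}"
  then have "order_iso_betw (\<lambda>x. nat (x - lo)) I {0..<nat (hi - lo + 1)} (\<le>) (\<le>)"
    using order_iso_int_interval by simp
  then show ?thesis by blast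
next
  fix lo assume "I = {lo..}"
  then have "order_iso_betw (\<lambda>x. nat (x - lo)) I UNIV (\<le>) (\<le>)"
    using order_iso_int_atLeast by simp
  then show ?thesis by blast
next
  fix hi assume "I = {..hi}"
  then have "order_iso_betw (\<lambda>x. nat (hi - x)) I UNIV (\<le>) (\<ge>)"
    using order_iso_int_atMost by simp
  then show ?thesis by blast
next
  assume "I = UNIV"
  then have "order_iso_betw id I (UNIV :: int set) (\<le>) (\<le>)"
    by (simp add: order_iso_betw_def)
  then show ?thesis by blast
qed

theorem mainTheorem6:
  fixes G :: "('v, 'a) graph"
  assumes "wf_graph G"
    and "free_cat_is_total_order G"
  shows "(\<exists>n::nat. free_cat_iso_poset G {0..<n} (\<le>))
       \<or> free_cat_iso_poset G (UNIV :: nat set) (\<le>)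
       \<or> free_cat_iso_poset G (UNIV :: nat set) (\<ge>)
       \<or> free_cat_iso_poset G (UNIV :: int set) (\<le>)"
proof -
  obtain le where refl: "\<forall>x \<in> gobj G. le x x"
    and trans: "\<forall>x \<in> gobj G. \<forall>y \<in> gobj G. \<forall>z \<in> gobj G. le x y \<longrightarrow> le y z \<longrightarrow> le x z"
    and antisym: "\<forall>x \<in> gobj G. \<forall>y \<in> gobj G. le x y \<longrightarrow> le y x \<longrightarrow> x = y"
    and total: "\<forall>x \<in> gobj G. \<forall>y \<in> gobj G. le x y \<or> le y x"
    and homs: "\<forall>x \<in> gobj G. \<forall>y \<in> gobj G. \<exists>h. bij_betw h (free_hom G x y) (poset_hom le x y)"
    using assms(2) unfolding free_cat_is_total_order_def by blast
  have "locally_finite_total_order (gobj G) le"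
    using refl trans antisym total thin_free_cat_finite_interval[OF trans homs]
    by unfold_locales blast+
  then obtain r :: "'v \<Rightarrow> int"
    where r: "order_iso_betw r (gobj G) (r ` gobj G) le (\<le>)" and "int_convex (r ` gobj G)"
    using locally_finite_total_order_embeds_int by blast
  have iso: "free_cat_iso_poset G P le'"
    if "order_iso_betw g (r ` gobj G) P (\<le>) le'" for g :: "int \<Rightarrow> 'b" and P le'
    using free_cat_iso_poset_if_order_iso[OF homs order_iso_betw_comp[OF r that]] .
  from int_convex_order_iso[OF \<open>int_convex (r ` gobj G)\<close>] show ?thesis
    by (elim disjE exE) (blast dest: iso)+
qed

end
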